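(* Let $(x_n,y_n)_{n=1}^N$ be labeled points with $x_n$ in a bounded subset of $\mathbb{H}^{d}$ and $y_n\in\{-1,1\}$, and assume the point set is linearly separable with margin $\varepsilon>0$, i.e. there is $w^*\in\mathbb{R}^{d+1}$ with $[w^*,w^*]=-C_{\mathbb H}$ and $y_n\,\mathrm{asinh}([w^*,x_n])\ge\varepsilon$ for all $n$. Consider the hyperbolic perceptron: start with $w^0=0\in\mathbb{R}^{d+1}$, cycle through $n=1,\dots,N,1,\dots$, and whenever $\mathrm{sgn}([w^k,x_n])\ne y_n$ update $w^{k+1}=w^k+y_nHx_n$. Then this perceptron converges in $O\big(1/\sinh^2(\varepsilon)\big)$ steps.
   Context: $\mathbb{H}^{d}=\{x\in\mathbb{R}^{d+1}:[x,x]=C_{\mathbb H}^{-1},x_1>0\}$ is the Lorentz ('Loid) model of hyperbolic space with curvature $C_{\mathbb H}<0$, where $[u,v]=u^\top Hv$ and $H=\mathrm{diag}(-1,1,\dots,1)\in\mathbb{R}^{(d+1)\times(d+1)}$. Convergence means that after the stated number of updates all points are correctly classified by $x\mapsto\mathrm{sgn}([w^k,x])$. *)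

theory Defs
  imports Complex_Main
begin

text \<open>Vectors in R^(d+1) are represented as functions nat => real; only the
coordinates 0..d are relevant (coordinate 0 is the time-like coordinate x_1).\<close>

definition lorentz :: "nat \<Rightarrow> (nat \<Rightarrow> real) \<Rightarrow> (nat \<Rightarrow> real) \<Rightarrow> real" where
  "lorentz d u v = - u 0 * v 0 + (\<Sum>i\<in>{1..d}. u i * v i)"

definition Hmul :: "nat \<Rightarrow> (nat \<Rightarrow> real) \<Rightarrow> (nat \<Rightarrow> real)" where
  "Hmul d x = (\<lambda>i. if i = 0 then - x 0 else if i \<le> d then x i else 0)"

definition hyperboloid :: "nat \<Rightarrow> real \<Rightarrow> (nat \<Rightarrow> real) set" where
  "hyperboloid d C = {x. lorentz d x x = 1 / C \<and> x 0 > 0}"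

definition eucl_sq :: "nat \<Rightarrow> (nat \<Rightarrow> real) \<Rightarrow> real" where
  "eucl_sq d x = (\<Sum>i\<le>d. (x i)^2)"

text \<open>Hyperbolic perceptron: w t is the weight vector before the t-th examination;
at examination t the point with index t mod N is examined.\<close>
fun hperc :: "nat \<Rightarrow> nat \<Rightarrow> (nat \<Rightarrow> nat \<Rightarrow> real) \<Rightarrow> (nat \<Rightarrow> real) \<Rightarrow> nat \<Rightarrow> (nat \<Rightarrow> real)" where
  "hperc d N x y 0 = (\<lambda>_. 0)"
| "hperc d N x y (Suc t) =
     (let w = hperc d N x y t; n = t mod N in
      if sgn (lorentz d w (x n)) \<noteq> y n then (\<lambda>i. w i + y n * Hmul d (x n) i) else w)"

definition hperc_mistake :: "nat \<Rightarrow> nat \<Rightarrow> (nat \<Rightarrow> nat \<Rightarrow> real) \<Rightarrow> (nat \<Rightarrow> real) \<Rightarrow> nat \<Rightarrow> bool" where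
  "hperc_mistake d N x y t \<longleftrightarrow>
     sgn (lorentz d (hperc d N x y t) (x (t mod N))) \<noteq> y (t mod N)"

end

theory Submission
  imports Defs "HOL-Analysis.Convex"
begin

text \<open>Since \<open>[u, v]\<close> is the Euclidean inner product of \<open>u\<close> and \<open>H v\<close>, and \<open>H\<close> is a Euclidean
  isometry, the hyperbolic perceptron is the Euclidean perceptron run on the points \<open>y\<^sub>n H x\<^sub>n\<close>.
  The margin hypothesis gives \<open>y\<^sub>n [w\<^sup>*, x\<^sub>n] \<ge> sinh \<epsilon>\<close>, so Novikoff's argument applies: after
  \<open>m\<close> mistakes \<open>\<langle>w\<^sup>*, w\<rangle> \<ge> m sinh \<epsilon>\<close> while \<open>|w|\<^sup>2 \<le> m R\<^sup>2\<close>, and Cauchy-Schwarz yields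
  \<open>m \<le> |w\<^sup>*|\<^sup>2 R\<^sup>2 / sinh\<^sup>2 \<epsilon>\<close> with Euclidean norms. Finitely many mistakes mean the weights are
  eventually constant, and one further pass over the data shows that they classify every point.\<close>

definition euclid_dot :: "nat \<Rightarrow> (nat \<Rightarrow> real) \<Rightarrow> (nat \<Rightarrow> real) \<Rightarrow> real" where
  "euclid_dot d u v = (\<Sum>i\<le>d. u i * v i)"

lemma sum_atMost_split_0:
  fixes d :: nat
  shows "(\<Sum>i\<le>d. f i) = f 0 + (\<Sum>i\<in>{1..d}. f i :: real)"
proof -
  have "{..d} = insert 0 {1..d}" by (auto simp: not_less_eq_eq)
  then show ?thesis by simp
qed

lemma lorentz_eq_euclid_dot_Hmul: "lorentz d u v = euclid_dot d u (Hmul d v)"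
  unfolding euclid_dot_def sum_atMost_split_0 lorentz_def Hmul_def by (auto intro!: sum.cong)

lemma eucl_sq_Hmul [simp]: "eucl_sq d (Hmul d x) = eucl_sq d x"
  unfolding eucl_sq_def Hmul_def by (auto intro!: sum.cong)

lemma eucl_sq_nonneg: "eucl_sq d x \<ge> 0"
  unfolding eucl_sq_def by (simp add: sum_nonneg)

lemma euclid_dot_add_scaled:
  "euclid_dot d u (\<lambda>i. v i + c * z i) = euclid_dot d u v + c * euclid_dot d u z"
  unfolding euclid_dot_def by (simp add: algebra_simps sum.distrib sum_distrib_left)

lemma eucl_sq_add_scaled:
  "eucl_sq d (\<lambda>i. v i + c * z i) = eucl_sq d v + 2 * c * euclid_dot d v z + c\<^sup>2 * eucl_sq d z"
  unfolding eucl_sq_def euclid_dot_def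
  by (simp add: power2_eq_square algebra_simps sum.distrib sum_distrib_left)

lemma euclid_dot_Cauchy_Schwarz: "(euclid_dot d u v)\<^sup>2 \<le> eucl_sq d u * eucl_sq d v"
  unfolding euclid_dot_def eucl_sq_def by (rule Cauchy_Schwarz_ineq_sum)

lemma sinh_le_mult_if_le_mult_arsinh:
  fixes y a \<epsilon> :: real
  assumes "y \<in> {-1, 1}" and "\<epsilon> \<le> y * arsinh a"
  shows "sinh \<epsilon> \<le> y * a"
proof -
  have "y * arsinh a = arsinh (y * a)" using assms(1) by auto
  then show ?thesis using assms(2) by (metis sinh_arsinh_real sinh_real_le_iff)
qed

lemma mult_nonpos_if_sgn_ne:
  fixes y a :: real
  assumes "y \<in> {-1, 1}" and "sgn a \<noteq> y"
  shows "y * a \<le> 0"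
  using assms by (auto simp: sgn_if split: if_splits)

definition hperc_mistakes :: "nat \<Rightarrow> nat \<Rightarrow> (nat \<Rightarrow> nat \<Rightarrow> real) \<Rightarrow> (nat \<Rightarrow> real) \<Rightarrow> nat \<Rightarrow> nat" where
  "hperc_mistakes d N x y t = card {s. s < t \<and> hperc_mistake d N x y s}"

lemma hperc_Suc:
  "hperc d N x y (Suc t) =
    (if hperc_mistake d N x y t
     then (\<lambda>i. hperc d N x y t i + y (t mod N) * Hmul d (x (t mod N)) i)
     else hperc d N x y t)"
  by (simp add: hperc_mistake_def Let_def)

declare hperc.simps(2) [simp del]

lemma hperc_mistakes_0 [simp]: "hperc_mistakes d N x y 0 = 0"
  by (simp add: hperc_mistakes_def)

lemma hperc_mistakes_Suc:
  "hperc_mistakes d N x y (Suc t) =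
    hperc_mistakes d N x y t + (if hperc_mistake d N x y t then 1 else 0)"
proof -
  have "{s. s < Suc t \<and> hperc_mistake d N x y s} =
      (if hperc_mistake d N x y t then insert t else id) {s. s < t \<and> hperc_mistake d N x y s}"
    by (auto simp: less_Suc_eq)
  then show ?thesis by (simp add: hperc_mistakes_def)
qed

lemma hperc_euclid_dot_ge:
  assumes "N > 0" and margin: "\<forall>n<N. \<gamma> \<le> y n * lorentz d u (x n)"
  shows "\<gamma> * hperc_mistakes d N x y t \<le> euclid_dot d u (hperc d N x y t)"
proof (induction t)
  case 0
  then show ?case by (simp add: euclid_dot_def)
next
  case (Suc t)
  have "\<gamma> \<le> y (t mod N) * lorentz d u (x (t mod N))"
    using margin \<open>N > 0\<close> by simp
  then show ?case
    using Suc.IH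
    by (simp add: hperc_Suc hperc_mistakes_Suc euclid_dot_add_scaled
        lorentz_eq_euclid_dot_Hmul distrib_left)
qed

lemma hperc_eucl_sq_le:
  fixes R :: real
  assumes "N > 0" and labels: "\<forall>n<N. y n \<in> {-1, 1}"
    and radius: "\<forall>n<N. eucl_sq d (x n) \<le> R\<^sup>2"
  shows "eucl_sq d (hperc d N x y t) \<le> hperc_mistakes d N x y t * R\<^sup>2"
proof (induction t)
  case 0
  then show ?case by (simp add: eucl_sq_def)
next
  case (Suc t)
  define n where "n = t mod N"
  define w where "w = hperc d N x y t"
  have "n < N" using \<open>N > 0\<close> by (simp add: n_def)
  then have y: "y n \<in> {-1, 1}" and x: "eucl_sq d (x n) \<le> R\<^sup>2"
    using labels radius by auto
  show ?case
  proof (cases "hperc_mistake d N x y t")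
    case True
    then have "y n * lorentz d w (x n) \<le> 0"
      using mult_nonpos_if_sgn_ne[OF y] by (simp add: hperc_mistake_def w_def n_def)
    moreover have "(y n)\<^sup>2 = 1" using y by auto
    ultimately show ?thesis
      using True Suc.IH x
      by (simp add: hperc_Suc hperc_mistakes_Suc eucl_sq_add_scaled lorentz_eq_euclid_dot_Hmul
          distrib_right flip: w_def n_def)
  next
    case False
    then show ?thesis using Suc.IH by (simp add: hperc_Suc hperc_mistakes_Suc)
  qed
qed

theorem hperc_mistakes_le:
  fixes R :: real
  assumes "N > 0" and "\<gamma> > 0"
    and labels: "\<forall>n<N. y n \<in> {-1, 1}"
    and margin: "\<forall>n<N. \<gamma> \<le> y n * lorentz d u (x n)"
    and radius: "\<forall>n<N. eucl_sq d (x n) \<le> R\<^sup>2"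
  shows "real (hperc_mistakes d N x y t) \<le> eucl_sq d u * R\<^sup>2 / \<gamma>\<^sup>2"
proof -
  define m where "m = real (hperc_mistakes d N x y t)"
  define w where "w = hperc d N x y t"
  have "(m * \<gamma>)\<^sup>2 \<le> (euclid_dot d u w)\<^sup>2"
    using hperc_euclid_dot_ge[OF \<open>N > 0\<close> margin] \<open>\<gamma> > 0\<close>
    by (intro power_mono) (auto simp: m_def w_def mult.commute)
  also have "\<dots> \<le> eucl_sq d u * eucl_sq d w"
    by (rule euclid_dot_Cauchy_Schwarz)
  also have "\<dots> \<le> eucl_sq d u * (m * R\<^sup>2)"
    using hperc_eucl_sq_le[OF \<open>N > 0\<close> labels radius]
    by (intro mult_left_mono) (auto simp: m_def w_def eucl_sq_nonneg)
  finally have "m * (m * \<gamma>\<^sup>2) \<le> m * (eucl_sq d u * R\<^sup>2)"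
    by (simp add: power2_eq_square algebra_simps)
  moreover have "m \<ge> 0" by (simp add: m_def)
  ultimately have "m * \<gamma>\<^sup>2 \<le> eucl_sq d u * R\<^sup>2"
    using eucl_sq_nonneg[of d u] by (cases "m = 0") auto
  then show ?thesis using \<open>\<gamma> > 0\<close> by (simp add: m_def field_simps)
qed

lemma finite_if_card_lessThan_bounded:
  fixes P :: "nat \<Rightarrow> bool"
  assumes bounded: "\<forall>t. real (card {s. s < t \<and> P s}) \<le> B"
  shows "finite {s. P s}"
proof (rule ccontr)
  assume "infinite {s. P s}"
  then obtain A where A: "A \<subseteq> {s. P s}" "finite A" "card A = Suc (nat \<lceil>B\<rceil>)"
    using infinite_arbitrarily_large by blast
  then obtain t where "A \<subseteq> {..<t}"
    using finite_nat_set_iff_bounded by (metis lessThan_iff subsetI)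
  then have "card A \<le> card {s. s < t \<and> P s}"
    using A by (intro card_mono) auto
  then show False using bounded[rule_format, of t] A(3) by linarith
qed

lemma hperc_const_if_no_mistakes:
  assumes "\<forall>s\<ge>T. \<not> hperc_mistake d N x y s" and "T \<le> t"
  shows "hperc d N x y t = hperc d N x y T"
  using assms(2) by (induction t rule: dec_induct) (simp_all add: hperc_Suc assms(1))

lemma hperc_classifies_if_no_mistakes:
  assumes "N > 0" and no_mistake: "\<forall>t\<ge>T. \<not> hperc_mistake d N x y t" and "n < N"
  shows "sgn (lorentz d (hperc d N x y T) (x n)) = y n"
proof -
  define t where "t = N * T + n"
  have "T \<le> t" using \<open>N > 0\<close> by (simp add: t_def trans_le_add1)
  then have "hperc d N x y t = hperc d N x y T"
    using no_mistake hperc_const_if_no_mistakes by blast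
  moreover have "t mod N = n" using \<open>n < N\<close> by (simp add: t_def)
  ultimately show ?thesis
    using no_mistake[rule_format, OF \<open>T \<le> t\<close>] by (simp add: hperc_mistake_def)
qed

lemma hperc_converges:
  assumes "N > 0" and bounded: "\<forall>t. real (hperc_mistakes d N x y t) \<le> B"
  shows "\<exists>T. (\<forall>n<N. sgn (lorentz d (hperc d N x y T) (x n)) = y n) \<and>
             real (hperc_mistakes d N x y T) \<le> B"
proof -
  have "finite {t. hperc_mistake d N x y t}"
    using bounded unfolding hperc_mistakes_def by (rule finite_if_card_lessThan_bounded)
  then obtain T where "\<forall>t\<ge>T. \<not> hperc_mistake d N x y t"
    using finite_nat_set_iff_bounded by (metis mem_Collect_eq not_le)
  then show ?thesis
    using hperc_classifies_if_no_mistakes[OF \<open>N > 0\<close>] bounded by blast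
qed

theorem theorem4:
  fixes d :: nat and C R :: real and wstar :: "nat \<Rightarrow> real"
  assumes "C < 0"
    and "lorentz d wstar wstar = - C"
  shows "\<exists>K::real. \<forall>(N::nat) (x::nat \<Rightarrow> nat \<Rightarrow> real) (y::nat \<Rightarrow> real) (\<epsilon>::real).
     N \<ge> 1 \<longrightarrow> \<epsilon> > 0 \<longrightarrow>
     (\<forall>n<N. x n \<in> hyperboloid d C \<and> eucl_sq d (x n) \<le> R\<^sup>2) \<longrightarrow>
     (\<forall>n<N. y n \<in> {-1, 1}) \<longrightarrow>
     (\<forall>n<N. y n * arsinh (lorentz d wstar (x n)) \<ge> \<epsilon>) \<longrightarrow>
     (\<exists>T. (\<forall>n<N. sgn (lorentz d (hperc d N x y T) (x n)) = y n) \<and>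
          real (card {t. t < T \<and> hperc_mistake d N x y t}) \<le> K / (sinh \<epsilon>)\<^sup>2)"
proof (intro exI[of _ "eucl_sq d wstar * R\<^sup>2"] allI impI)
  fix N :: nat and x :: "nat \<Rightarrow> nat \<Rightarrow> real" and y :: "nat \<Rightarrow> real" and \<epsilon> :: real
  assume "N \<ge> 1" and "\<epsilon> > 0"
    and points: "\<forall>n<N. x n \<in> hyperboloid d C \<and> eucl_sq d (x n) \<le> R\<^sup>2"
    and labels: "\<forall>n<N. y n \<in> {-1, 1}"
    and margin: "\<forall>n<N. y n * arsinh (lorentz d wstar (x n)) \<ge> \<epsilon>"
  have "\<forall>n<N. sinh \<epsilon> \<le> y n * lorentz d wstar (x n)"
    using labels margin sinh_le_mult_if_le_mult_arsinh by blast
  moreover have "\<forall>n<N. eucl_sq d (x n) \<le> R\<^sup>2" using points by blast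
  moreover have "N > 0" "sinh \<epsilon> > 0" using \<open>N \<ge> 1\<close> \<open>\<epsilon> > 0\<close> by auto
  ultimately have "\<forall>t. real (hperc_mistakes d N x y t) \<le> eucl_sq d wstar * R\<^sup>2 / (sinh \<epsilon>)\<^sup>2"
    using labels hperc_mistakes_le by blast
  then show "\<exists>T. (\<forall>n<N. sgn (lorentz d (hperc d N x y T) (x n)) = y n) \<and>
      real (card {t. t < T \<and> hperc_mistake d N x y t}) \<le> eucl_sq d wstar * R\<^sup>2 / (sinh \<epsilon>)\<^sup>2"
    using hperc_converges[OF \<open>N > 0\<close>] unfolding hperc_mistakes_def by blast
qed

end
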